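(* Let $(G,t)$ be a problem instance. Let $P$ be an induced path in $G$ from $p_1$ to $p_9$ visiting $p_1,p_2,\dots,p_9$ in this order, and $Q$ an induced path from $q_1$ to $q_9$ visiting $q_1,\dots,q_9$ in this order, with $P$ and $Q$ vertex-disjoint and $p_iq_i\in E(G)$ for all $1\le i\le 9$. Suppose $\mathrm{tw}(G[V(P)\cup V(Q)])\le 2$ and every vertex of $V(P)\cup V(Q)$ having a neighbour outside $V(P)\cup V(Q)$ lies in $\{p_1,p_9,q_1,q_9\}$. Then $(G,t)$ has a solution if and only if $(G-p_5q_5,t)$ has a solution, where $G-p_5q_5$ denotes $G$ with the edge $p_5q_5$ deleted.
   Context: $\mathrm{tw}$ is treewidth. A solution for $(G,t)$ is $S\subseteq V(G)$ with $|S|\le t$ and $\mathrm{tw}(G-S)\le 2$. A path is induced if it is an induced subgraph of $G$. *)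

theory Defs
  imports Main
begin

definition simple_graph :: "'a set \<Rightarrow> 'a set set \<Rightarrow> bool" where
  "simple_graph V E \<longleftrightarrow> finite V \<and>
     (\<forall>e\<in>E. \<exists>u v. e = {u, v} \<and> u \<noteq> v \<and> u \<in> V \<and> v \<in> V)"

definition connected_on :: "'b set set \<Rightarrow> 'b set \<Rightarrow> bool" where
  "connected_on F S \<longleftrightarrow>
     (\<forall>x\<in>S. \<forall>y\<in>S. (\<lambda>a b. a \<in> S \<and> b \<in> S \<and> {a, b} \<in> F)\<^sup>*\<^sup>* x y)"

definition is_tree :: "'b set \<Rightarrow> 'b set set \<Rightarrow> bool" where
  "is_tree I F \<longleftrightarrow> simple_graph I F \<and> I \<noteq> {} \<and> connected_on F I \<and> card F + 1 = card I"

definition tree_decomposition ::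
  "'a set \<Rightarrow> 'a set set \<Rightarrow> 'b set \<Rightarrow> 'b set set \<Rightarrow> ('b \<Rightarrow> 'a set) \<Rightarrow> bool" where
  "tree_decomposition V E I F B \<longleftrightarrow>
     is_tree I F \<and>
     (\<forall>i\<in>I. B i \<subseteq> V) \<and>
     (\<forall>v\<in>V. \<exists>i\<in>I. v \<in> B i) \<and>
     (\<forall>e\<in>E. \<exists>i\<in>I. e \<subseteq> B i) \<and>
     (\<forall>v\<in>V. connected_on F {i\<in>I. v \<in> B i})"

definition tw_le :: "'a set \<Rightarrow> 'a set set \<Rightarrow> nat \<Rightarrow> bool" where
  "tw_le V E k \<longleftrightarrow> (\<exists>(I :: nat set) F B. tree_decomposition V E I F B \<and>
                                           (\<forall>i\<in>I. card (B i) \<le> k + 1))"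

definition induced_edges :: "'a set set \<Rightarrow> 'a set \<Rightarrow> 'a set set" where
  "induced_edges E S = {e \<in> E. e \<subseteq> S}"

definition del_edges :: "'a set set \<Rightarrow> 'a set \<Rightarrow> 'a set set" where
  "del_edges E S = {e \<in> E. e \<inter> S = {}}"

definition is_solution :: "'a set \<Rightarrow> 'a set set \<Rightarrow> nat \<Rightarrow> 'a set \<Rightarrow> bool" where
  "is_solution V E t S \<longleftrightarrow> S \<subseteq> V \<and> card S \<le> t \<and> tw_le (V - S) (del_edges E S) 2"

definition has_solution :: "'a set \<Rightarrow> 'a set set \<Rightarrow> nat \<Rightarrow> bool" where
  "has_solution V E t \<longleftrightarrow> (\<exists>S. is_solution V E t S)"

definition induced_path :: "'a set \<Rightarrow> 'a set set \<Rightarrow> (nat \<Rightarrow> 'a) \<Rightarrow> nat \<Rightarrow> bool" where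
  "induced_path V E p n \<longleftrightarrow> inj_on p {1..n} \<and> p ` {1..n} \<subseteq> V \<and>
     (\<forall>i\<in>{1..n}. \<forall>j\<in>{1..n}. {p i, p j} \<in> E \<longleftrightarrow> (i = j + 1 \<or> j = i + 1))"

end

theory Submission
  imports Defs
begin

text \<open>
  The easy direction holds because treewidth does not increase when an edge is deleted.

  Conversely, let S be a solution for G - p5q5. If S meets the rung p5q5, it is a solution for G.
  Otherwise count how many vertices S spends on the left corners p1, q1, on the right corners
  p9, q9 and on the interior of the ladder. If the left corners and the interior together take
  two vertices, replace them by {p1, q1}: then the rest of the ladder is attached to the rest of
  the graph only through the rung p9q9, and gluing tree decompositions along this edge gives
  treewidth 2 without using the edge p5q5; the right end is symmetric. Otherwise S misses the
  columns 2 to 4 (or, symmetrically, 6 to 8) and leaves a route from the right corners to column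
  5. A path outside the ladder from a left to a right corner would then give a K4 minor in
  G - p5q5 - S, impossible in treewidth 2 by the Helly property of subtrees. Hence the outside
  splits into a part attached at the left corners and a part attached at the right corners, and
  G - S is glued from these two and the ladder along the rungs p1q1 and p9q9.
\<close>

section \<open>Walks and connected sets\<close>

abbreviation adj_in :: "'b set set \<Rightarrow> 'b set \<Rightarrow> 'b \<Rightarrow> 'b \<Rightarrow> bool" where
  "adj_in F S \<equiv> \<lambda>a b. a \<in> S \<and> b \<in> S \<and> {a, b} \<in> F"

lemma walk_sym:
  assumes "(adj_in F S)\<^sup>*\<^sup>* x y"
  shows "(adj_in F S)\<^sup>*\<^sup>* y x"
proof -
  have "symp (adj_in F S)" by (auto intro: sympI simp: insert_commute)
  then show ?thesis using assms by (meson sympD symp_rtranclp)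
qed

lemma walk_mono: "(adj_in F S)\<^sup>*\<^sup>* x y \<Longrightarrow> F \<subseteq> F' \<Longrightarrow> S \<subseteq> S' \<Longrightarrow> (adj_in F' S')\<^sup>*\<^sup>* x y"
  by (erule mono_rtranclp[rule_format, rotated]) blast

lemma walk_in_set: "(adj_in F S)\<^sup>*\<^sup>* x y \<Longrightarrow> x \<in> S \<Longrightarrow> y \<in> S"
  by (induction rule: rtranclp_induct) auto

lemma connected_on_mono: "connected_on F S \<Longrightarrow> F \<subseteq> F' \<Longrightarrow> connected_on F' S"
  unfolding connected_on_def by (blast intro: walk_mono)

lemma connected_on_singleton: "connected_on F {a}"
  unfolding connected_on_def by simp

lemma connected_on_Un:
  assumes A: "connected_on F A" and B: "connected_on F B" and "a \<in> A" "b \<in> B"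
    and ab: "{a, b} \<in> F \<or> a = b"
  shows "connected_on F (A \<union> B)"
proof -
  let ?R = "adj_in F (A \<union> B)"
  have AA: "?R\<^sup>*\<^sup>* x y" if "x \<in> A" "y \<in> A" for x y
  proof (rule walk_mono[OF _ order_refl Un_upper1])
    show "(adj_in F A)\<^sup>*\<^sup>* x y" using A that unfolding connected_on_def by blast
  qed
  have BB: "?R\<^sup>*\<^sup>* x y" if "x \<in> B" "y \<in> B" for x y
  proof (rule walk_mono[OF _ order_refl Un_upper2])
    show "(adj_in F B)\<^sup>*\<^sup>* x y" using B that unfolding connected_on_def by blast
  qed
  have ab': "?R\<^sup>*\<^sup>* a b"
    using ab \<open>a \<in> A\<close> \<open>b \<in> B\<close> by auto
  have AB: "?R\<^sup>*\<^sup>* x y" if "x \<in> A" "y \<in> B" for x y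
    using AA[OF that(1) \<open>a \<in> A\<close>] ab' BB[OF \<open>b \<in> B\<close> that(2)] by (meson rtranclp_trans)
  show ?thesis
    unfolding connected_on_def
  proof (intro ballI)
    fix x y assume "x \<in> A \<union> B" "y \<in> A \<union> B"
    then show "?R\<^sup>*\<^sup>* x y"
      using AA BB AB walk_sym[OF AB] by blast
  qed
qed

lemma connected_on_insert:
  assumes "connected_on F A" "a \<in> A" "{a, b} \<in> F"
  shows "connected_on F (insert b A)"
  using connected_on_Un[OF assms(1) connected_on_singleton[of F b] assms(2)] assms(3) by simp

lemma connected_on_edge:
  assumes "{a, b} \<in> F" shows "connected_on F {a, b}"
proof -
  have "{b, a} \<in> F" using assms by (simp add: insert_commute)
  from connected_on_insert[OF connected_on_singleton singletonI this] show ?thesis by simp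
qed

lemma connected_on_join:
  assumes "connected_on F1 T1 \<or> T1 = {}" "connected_on F2 T2 \<or> T2 = {}"
    and "T1 \<noteq> {} \<Longrightarrow> T2 \<noteq> {} \<Longrightarrow> a \<in> T1 \<and> b \<in> T2"
  shows "connected_on (insert {a, b} (F1 \<union> F2)) (T1 \<union> T2)"
proof -
  let ?F = "insert {a, b} (F1 \<union> F2)"
  have "connected_on ?F T" if "connected_on F' T \<or> T = {}" "F' \<subseteq> ?F" for F' T
  proof (cases "T = {}")
    case False
    then have "connected_on F' T" using that(1) by blast
    then show ?thesis using that(2) by (rule connected_on_mono)
  qed (simp add: connected_on_def)
  then have "connected_on ?F T1" "connected_on ?F T2" using assms(1,2) by blast+
  then show ?thesis
    using assms(3) connected_on_Un[of ?F T1 T2 a b] by (cases "T1 = {}"; cases "T2 = {}") auto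
qed

lemma connected_on_image:
  assumes "connected_on F S" "inj f"
  shows "connected_on ((`) f ` F) (f ` S)"
proof -
  have "(adj_in ((`) f ` F) (f ` S))\<^sup>*\<^sup>* (f x) (f y)" if "(adj_in F S)\<^sup>*\<^sup>* x y" for x y
    using that
  proof (induction rule: rtranclp_induct)
    case (step y z)
    then have "f ` {y, z} \<in> (`) f ` F" by blast
    then have "{f y, f z} \<in> (`) f ` F" by simp
    with step show ?case by (auto intro: rtranclp.rtrancl_into_rtrancl)
  qed simp
  then show ?thesis using assms(1) unfolding connected_on_def by blast
qed

lemma connected_on_reachable:
  assumes "\<forall>a\<in>X. \<forall>b\<in>X. {a, b} \<in> E \<longrightarrow> {a, b} \<in> E'"
  shows "connected_on E' {y. (adj_in E X)\<^sup>*\<^sup>* u y}"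
proof -
  let ?A = "{y. (adj_in E X)\<^sup>*\<^sup>* u y}"
  have walk: "(adj_in E' ?A)\<^sup>*\<^sup>* x y" if "(adj_in E X)\<^sup>*\<^sup>* x y" "x \<in> ?A" for x y
    using that
  proof (induction rule: rtranclp_induct)
    case (step y z)
    have "y \<in> ?A" using step(1,4) by (auto intro: rtranclp_trans)
    moreover have "z \<in> ?A" using calculation step(2) by (auto intro: rtranclp.rtrancl_into_rtrancl)
    moreover have "{y, z} \<in> E'" using assms step(2) by blast
    ultimately show ?case using step(3)[OF step(4)] by (auto intro: rtranclp.rtrancl_into_rtrancl)
  qed simp
  show ?thesis
    unfolding connected_on_def
  proof (intro ballI)
    fix x y assume xy: "x \<in> ?A" "y \<in> ?A"
    then have "(adj_in E X)\<^sup>*\<^sup>* x y" by (blast intro: rtranclp_trans walk_sym)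
    then show "(adj_in E' ?A)\<^sup>*\<^sup>* x y" using walk xy(1) by blast
  qed
qed

lemma connected_on_walk:
  "xs \<noteq> [] \<Longrightarrow> \<forall>(a, b) \<in> set (zip xs (tl xs)). {a, b} \<in> F \<Longrightarrow> connected_on F (set xs)"
proof (induction xs)
  case (Cons x xs)
  show ?case
  proof (cases xs)
    case Nil
    then show ?thesis using connected_on_singleton by simp
  next
    case (Cons y ys)
    with Cons.prems have "{x, y} \<in> F" "connected_on F (set xs)" using Cons.IH by auto
    then show ?thesis
      using connected_on_insert[of F "set xs" y x] \<open>xs = y # ys\<close> by (simp add: insert_commute)
  qed
qed simp

definition linked_via :: "'a set \<Rightarrow> 'a set set \<Rightarrow> 'a \<Rightarrow> 'a \<Rightarrow> bool" where
  "linked_via X F c d \<longleftrightarrow> (\<exists>u w. u \<in> X \<and> {c, u} \<in> F \<and> {d, w} \<in> F \<and> (adj_in F X)\<^sup>*\<^sup>* u w)"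

lemma linked_via_sym:
  assumes "linked_via X F c d"
  shows "linked_via X F d c"
proof -
  obtain u w where uw: "u \<in> X" "{c, u} \<in> F" "{d, w} \<in> F" "(adj_in F X)\<^sup>*\<^sup>* u w"
    using assms unfolding linked_via_def by blast
  have "w \<in> X" using walk_in_set[OF uw(4,1)] .
  moreover have "(adj_in F X)\<^sup>*\<^sup>* w u" using walk_sym[OF uw(4)] .
  ultimately show ?thesis unfolding linked_via_def using uw(2,3) by blast
qed

definition reach_from :: "'a set set \<Rightarrow> 'a set \<Rightarrow> 'a set \<Rightarrow> 'a set" where
  "reach_from F X D = {w. \<exists>d\<in>D. \<exists>u\<in>X. {d, u} \<in> F \<and> (adj_in F X)\<^sup>*\<^sup>* u w}"

lemma reach_fromE:
  assumes "w \<in> reach_from F X D"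
  obtains d u where "d \<in> D" "u \<in> X" "{d, u} \<in> F" "(adj_in F X)\<^sup>*\<^sup>* u w"
  using assms unfolding reach_from_def by blast

lemma reach_from_subset: "reach_from F X D \<subseteq> X"
proof
  fix w assume "w \<in> reach_from F X D"
  then obtain d u where u: "u \<in> X" "(adj_in F X)\<^sup>*\<^sup>* u w" by (rule reach_fromE)
  show "w \<in> X" using walk_in_set[OF u(2,1)] .
qed

lemma reach_from_start: "d \<in> D \<Longrightarrow> u \<in> X \<Longrightarrow> {d, u} \<in> F \<Longrightarrow> u \<in> reach_from F X D"
  unfolding reach_from_def by (blast intro: rtranclp.rtrancl_refl)

lemma reach_from_closed:
  assumes "a \<in> reach_from F X D" "b \<in> X" "{a, b} \<in> F"
  shows "b \<in> reach_from F X D"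
proof -
  obtain d u where du: "d \<in> D" "u \<in> X" "{d, u} \<in> F" "(adj_in F X)\<^sup>*\<^sup>* u a"
    using assms(1) by (rule reach_fromE)
  have "a \<in> X" using subsetD[OF reach_from_subset assms(1)] .
  then have "(adj_in F X)\<^sup>*\<^sup>* u b"
    using rtranclp.rtrancl_into_rtrancl[OF du(4), of b] assms(2,3) by blast
  with du(1-3) show ?thesis unfolding reach_from_def by blast
qed

lemma reach_from_linked:
  assumes "a \<in> reach_from F X D" "{a, c} \<in> F"
  obtains d where "d \<in> D" "linked_via X F c d"
proof -
  obtain d u where du: "d \<in> D" "u \<in> X" "{d, u} \<in> F" "(adj_in F X)\<^sup>*\<^sup>* u a"
    using assms(1) by (rule reach_fromE)
  have "a \<in> X" using subsetD[OF reach_from_subset assms(1)] .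
  moreover have "{c, a} \<in> F" using assms(2) by (simp add: insert_commute)
  moreover have "(adj_in F X)\<^sup>*\<^sup>* a u" using walk_sym[OF du(4)] .
  ultimately have "linked_via X F c d" unfolding linked_via_def using du(3) by blast
  with du(1) show ?thesis by (rule that)
qed

section \<open>Trees and the Helly property\<close>

lemma is_tree_finite: "is_tree I F \<Longrightarrow> finite I"
  unfolding is_tree_def simple_graph_def by blast

lemma is_tree_edgeE:
  assumes "is_tree I F" "e \<in> F"
  obtains u v where "e = {u, v}" "u \<noteq> v" "u \<in> I" "v \<in> I"
  using assms unfolding is_tree_def simple_graph_def by blast

lemma is_tree_edge_subset: "is_tree I F \<Longrightarrow> e \<in> F \<Longrightarrow> e \<subseteq> I"
  by (erule is_tree_edgeE) auto

lemma is_tree_finite_edges: "is_tree I F \<Longrightarrow> finite F"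
  by (meson Pow_iff finite_Pow_iff is_tree_edge_subset is_tree_finite rev_finite_subset subsetI)

lemma is_tree_image:
  assumes T: "is_tree I F" and f: "inj f"
  shows "is_tree (f ` I) ((`) f ` F)"
  unfolding is_tree_def
proof (intro conjI)
  show "simple_graph (f ` I) ((`) f ` F)"
    unfolding simple_graph_def
  proof (intro conjI ballI)
    show "finite (f ` I)" using is_tree_finite[OF T] by simp
  next
    fix e' assume "e' \<in> (`) f ` F"
    then obtain e where "e \<in> F" "e' = f ` e" by blast
    obtain u v where uv: "e = {u, v}" "u \<noteq> v" "u \<in> I" "v \<in> I"
      using is_tree_edgeE[OF T \<open>e \<in> F\<close>] by blast
    have "e' = {f u, f v}" using \<open>e' = f ` e\<close> uv(1) by simp
    moreover have "f u \<noteq> f v" using f uv(2) by (meson injD)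
    ultimately show "\<exists>u v. e' = {u, v} \<and> u \<noteq> v \<and> u \<in> f ` I \<and> v \<in> f ` I"
      using uv(3,4) by blast
  qed
  show "f ` I \<noteq> {}" using T unfolding is_tree_def by blast
  show "connected_on ((`) f ` F) (f ` I)" using connected_on_image[OF _ f] T unfolding is_tree_def by blast
  have "inj_on ((`) f) F" using f by (meson inj_image_eq_iff inj_onI)
  then have "card ((`) f ` F) = card F" by (rule card_image)
  moreover have "card (f ` I) = card I" using f by (simp add: card_image inj_on_subset)
  ultimately show "card ((`) f ` F) + 1 = card (f ` I)" using T unfolding is_tree_def by simp
qed

lemma is_tree_join:
  assumes T1: "is_tree I1 F1" and T2: "is_tree I2 F2" and dis: "I1 \<inter> I2 = {}"
    and a: "a \<in> I1" and b: "b \<in> I2"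
  shows "is_tree (I1 \<union> I2) (insert {a, b} (F1 \<union> F2))"
  unfolding is_tree_def
proof (intro conjI)
  let ?F = "insert {a, b} (F1 \<union> F2)"
  show "simple_graph (I1 \<union> I2) ?F"
    unfolding simple_graph_def
  proof (intro conjI ballI)
    show "finite (I1 \<union> I2)" using is_tree_finite[OF T1] is_tree_finite[OF T2] by simp
  next
    fix e assume "e \<in> ?F"
    then consider "e = {a, b}" | "e \<in> F1" | "e \<in> F2" by blast
    then show "\<exists>u v. e = {u, v} \<and> u \<noteq> v \<and> u \<in> I1 \<union> I2 \<and> v \<in> I1 \<union> I2"
    proof cases
      case 1
      then show ?thesis using a b dis by blast
    next
      case 2
      then obtain u v where "e = {u, v}" "u \<noteq> v" "u \<in> I1" "v \<in> I1" using is_tree_edgeE[OF T1] by blast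
      then show ?thesis by blast
    next
      case 3
      then obtain u v where "e = {u, v}" "u \<noteq> v" "u \<in> I2" "v \<in> I2" using is_tree_edgeE[OF T2] by blast
      then show ?thesis by blast
    qed
  qed
  show "I1 \<union> I2 \<noteq> {}" using a by blast
  have "connected_on F1 I1" "connected_on F2 I2" using T1 T2 unfolding is_tree_def by blast+
  then have "connected_on ?F I1" "connected_on ?F I2" by (auto elim: connected_on_mono)
  then show "connected_on ?F (I1 \<union> I2)" by (rule connected_on_Un[OF _ _ a b]) simp
  have "F1 \<inter> F2 = {}"
  proof (rule ccontr)
    assume "F1 \<inter> F2 \<noteq> {}"
    then obtain e where "e \<in> F1" "e \<in> F2" by blast
    then obtain u v where "e = {u, v}" "u \<in> I1" using is_tree_edgeE[OF T1] by blast
    moreover have "e \<subseteq> I2" using is_tree_edge_subset[OF T2 \<open>e \<in> F2\<close>] .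
    ultimately show False using dis by blast
  qed
  moreover have "{a, b} \<notin> F1 \<union> F2"
    using a b dis is_tree_edge_subset[OF T1] is_tree_edge_subset[OF T2] by blast
  ultimately have "card ?F = card F1 + card F2 + 1"
    using is_tree_finite_edges[OF T1] is_tree_finite_edges[OF T2] by (simp add: card_Un_disjoint)
  moreover have "card (I1 \<union> I2) = card I1 + card I2"
    using is_tree_finite[OF T1] is_tree_finite[OF T2] dis by (simp add: card_Un_disjoint)
  ultimately show "card ?F + 1 = card (I1 \<union> I2)" using T1 T2 unfolding is_tree_def by simp
qed

definition leaf_at :: "'b set set \<Rightarrow> 'b \<Rightarrow> 'b \<Rightarrow> bool" where
  "leaf_at F l j \<longleftrightarrow> l \<noteq> j \<and> {l, j} \<in> F \<and> (\<forall>e\<in>F. l \<in> e \<longrightarrow> e = {l, j})"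

text \<open>Degrees sum to 2|F| = 2|I| - 2.\<close>
lemma is_tree_degree_lt_2:
  assumes T: "is_tree I F"
  shows "\<exists>l\<in>I. card {e \<in> F. l \<in> e} < 2"
proof -
  have fin: "finite I" using is_tree_finite[OF T] .
  have finF: "finite F" using is_tree_finite_edges[OF T] .
  have c2: "\<forall>e\<in>F. card {i \<in> I. i \<in> e} = 2"
  proof
    fix e assume "e \<in> F"
    obtain u v where "e = {u, v}" "u \<noteq> v" "u \<in> I" "v \<in> I" using is_tree_edgeE[OF T \<open>e \<in> F\<close>] by blast
    then have "{i \<in> I. i \<in> e} = {u, v}" by auto
    then show "card {i \<in> I. i \<in> e} = 2" using \<open>u \<noteq> v\<close> by simp
  qed
  have degree_sum: "(\<Sum>i\<in>I. card {e \<in> F. i \<in> e}) = 2 * card F"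
    using sum_multicount[OF fin finF c2] .
  have cF: "card F + 1 = card I" using T unfolding is_tree_def by blast
  show ?thesis
  proof (rule ccontr)
    assume "\<not> ?thesis"
    then have "(\<Sum>i\<in>I. (2::nat)) \<le> (\<Sum>i\<in>I. card {e \<in> F. i \<in> e})" by (intro sum_mono) auto
    then show False using degree_sum cF by simp
  qed
qed

text \<open>A node of degree below 2 has degree 1 by connectivity.\<close>
lemma is_tree_leaf_exists:
  assumes T: "is_tree I F" and c: "card I \<ge> 2"
  obtains l j where "l \<in> I" "j \<in> I" "leaf_at F l j"
proof -
  obtain l where l: "l \<in> I" "card {e \<in> F. l \<in> e} < 2" using is_tree_degree_lt_2[OF T] by blast
  have "I \<noteq> {l}" using c by auto
  then obtain j0 where j0: "j0 \<in> I" "j0 \<noteq> l" using l(1) by blast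
  have "(adj_in F I)\<^sup>*\<^sup>* l j0"
    using T l(1) j0(1) unfolding is_tree_def connected_on_def by blast
  then have "\<exists>z. {l, z} \<in> F"
    using j0(2) by (cases rule: converse_rtranclpE) auto
  then have "card {e \<in> F. l \<in> e} > 0"
    using is_tree_finite_edges[OF T] by (auto simp: card_gt_0_iff)
  then have "card {e \<in> F. l \<in> e} = 1" using l(2) by linarith
  then obtain e0 where e0: "{e \<in> F. l \<in> e} = {e0}" using card_1_singletonE by blast
  then have "e0 \<in> F" "l \<in> e0" by auto
  then obtain j where j: "e0 = {l, j}" "j \<noteq> l" "j \<in> I"
    using T by (elim is_tree_edgeE) (auto simp: insert_commute)
  show ?thesis
    using that[OF l(1) j(3)] j \<open>e0 \<in> F\<close> e0 unfolding leaf_at_def by auto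
qed

lemma walk_avoiding_leaf:
  assumes lf: "leaf_at F l j"
    and w: "(adj_in F T)\<^sup>*\<^sup>* x y" and x: "x \<noteq> l"
  shows "(adj_in (F - {{l, j}}) (T - {l}))\<^sup>*\<^sup>* x (if y = l then j else y)"
  using w
proof (induction rule: rtranclp_induct)
  case (step y z)
  have lj: "l \<noteq> j" "\<forall>e\<in>F. l \<in> e \<longrightarrow> e = {l, j}" using lf unfolding leaf_at_def by auto
  show ?case
  proof (cases "z = l")
    case True
    then have "{y, l} = {l, j}" using step lj by (metis insertCI)
    then have "y = j" using lj(1) by (metis doubleton_eq_iff)
    then show ?thesis using step True lj(1) by simp
  next
    case False
    show ?thesis
    proof (cases "y = l")
      case True
      then have "{l, z} = {l, j}" using step lj by (metis insertCI)
      then have "z = j" using False by (metis doubleton_eq_iff)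
      then show ?thesis using step True False by simp
    next
      case yl: False
      have "{y, z} \<noteq> {l, j}" using yl False by (metis doubleton_eq_iff)
      then show ?thesis using step yl False by (auto intro: rtranclp.rtrancl_into_rtrancl)
    qed
  qed
qed (use x in simp)

lemma connected_on_remove_leaf:
  assumes "connected_on F T" "leaf_at F l j"
  shows "connected_on (F - {{l, j}}) (T - {l})"
  unfolding connected_on_def
proof (intro ballI)
  fix x y assume xy: "x \<in> T - {l}" "y \<in> T - {l}"
  then have "(adj_in F T)\<^sup>*\<^sup>* x y" using assms(1) unfolding connected_on_def by blast
  from walk_avoiding_leaf[OF assms(2) this] xy
  show "(adj_in (F - {{l, j}}) (T - {l}))\<^sup>*\<^sup>* x y" by simp
qed

lemma connected_on_leaf_neighbour:
  assumes "connected_on F T" "leaf_at F l j" "l \<in> T" "t \<in> T" "t \<noteq> l"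
  shows "j \<in> T"
proof -
  have "(adj_in F T)\<^sup>*\<^sup>* t l" using assms unfolding connected_on_def by blast
  from walk_avoiding_leaf[OF assms(2) this assms(5)]
  have "(adj_in (F - {{l, j}}) (T - {l}))\<^sup>*\<^sup>* t j" by simp
  from walk_in_set[OF this] assms(4,5) show ?thesis by blast
qed

lemma is_tree_remove_leaf:
  assumes T: "is_tree I F" and "l \<in> I" and lf: "leaf_at F l j"
  shows "is_tree (I - {l}) (F - {{l, j}})"
proof -
  have lj: "{l, j} \<in> F" "\<forall>e\<in>F. l \<in> e \<longrightarrow> e = {l, j}" using lf unfolding leaf_at_def by auto
  have "j \<in> I" using is_tree_edge_subset[OF T lj(1)] by simp
  have sg: "simple_graph (I - {l}) (F - {{l, j}})"
    unfolding simple_graph_def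
  proof (intro conjI ballI)
    show "finite (I - {l})" using is_tree_finite[OF T] by simp
  next
    fix e assume e: "e \<in> F - {{l, j}}"
    then have "l \<notin> e" using lj by blast
    with e T show "\<exists>u v. e = {u, v} \<and> u \<noteq> v \<and> u \<in> I - {l} \<and> v \<in> I - {l}"
      by (elim is_tree_edgeE) blast+
  qed
  have cI: "card F + 1 = card I" using T unfolding is_tree_def by blast
  have "card F > 0" using lj(1) is_tree_finite_edges[OF T] by (auto simp: card_gt_0_iff)
  then have "card (F - {{l, j}}) + 1 = card (I - {l})"
    using cI lj(1) \<open>l \<in> I\<close> is_tree_finite[OF T] is_tree_finite_edges[OF T]
    by (simp add: card_Diff_singleton)
  moreover have "connected_on (F - {{l, j}}) (I - {l})"
    using connected_on_remove_leaf[OF _ lf] T unfolding is_tree_def by blast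
  moreover have "I - {l} \<noteq> {}" using \<open>j \<in> I\<close> lf unfolding leaf_at_def by blast
  ultimately show ?thesis using sg unfolding is_tree_def by blast
qed

text \<open>Induction on the tree: removing a leaf keeps the family pairwise intersecting, unless some
  subtree is that single leaf, which then lies in all of them.\<close>
lemma subtrees_Helly:
  assumes "is_tree I F" "\<forall>k\<in>K. T k \<subseteq> I \<and> T k \<noteq> {} \<and> connected_on F (T k)"
    "\<forall>k\<in>K. \<forall>k'\<in>K. T k \<inter> T k' \<noteq> {}"
  shows "\<exists>i\<in>I. \<forall>k\<in>K. i \<in> T k"
  using assms
proof (induction "card I" arbitrary: I F T rule: less_induct)
  case less
  have fin: "finite I" using is_tree_finite[OF less.prems(1)] .
  have ne: "I \<noteq> {}" using less.prems(1) unfolding is_tree_def by blast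
  show ?case
  proof (cases "card I \<ge> 2")
    case False
    have "card I > 0" using fin ne by (simp add: card_gt_0_iff)
    then have "card I = 1" using False by linarith
    then obtain i where "I = {i}" using card_1_singletonE by blast
    then show ?thesis using less.prems(2) by blast
  next
    case True
    obtain l j where lf: "l \<in> I" "j \<in> I" "leaf_at F l j"
      using is_tree_leaf_exists[OF less.prems(1) True] by blast
    show ?thesis
    proof (cases "\<exists>k\<in>K. T k = {l}")
      case True
      then show ?thesis using less.prems(3) lf(1) by fastforce
    next
      case False
      let ?T = "\<lambda>k. T k - {l}"
      have t2: "\<forall>k\<in>K. ?T k \<subseteq> I - {l} \<and> ?T k \<noteq> {} \<and> connected_on (F - {{l, j}}) (?T k)"
        using less.prems(2) False connected_on_remove_leaf[OF _ lf(3)] by blast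
      have t3: "\<forall>k\<in>K. \<forall>k'\<in>K. ?T k \<inter> ?T k' \<noteq> {}"
      proof (intro ballI)
        fix k k' assume kk: "k \<in> K" "k' \<in> K"
        show "?T k \<inter> ?T k' \<noteq> {}"
        proof (cases "T k \<inter> T k' \<subseteq> {l}")
          case True
          then have "l \<in> T k" "l \<in> T k'" using less.prems(3) kk by blast+
          then have "j \<in> T k" "j \<in> T k'"
            using False kk less.prems(2) connected_on_leaf_neighbour[OF _ lf(3)] by blast+
          then show ?thesis using lf(3) unfolding leaf_at_def by blast
        qed blast
      qed
      have "card (I - {l}) < card I" using fin lf(1) by (meson card_Diff1_less)
      from less.hyps[OF this is_tree_remove_leaf[OF less.prems(1) lf(1,3)] t2 t3]
      show ?thesis by blast
    qed
  qed
qed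

section \<open>Tree decompositions\<close>

lemma tree_decompositionD:
  assumes "tree_decomposition V E I F B"
  shows "is_tree I F" "\<And>i. i \<in> I \<Longrightarrow> B i \<subseteq> V" "\<And>v. v \<in> V \<Longrightarrow> \<exists>i\<in>I. v \<in> B i"
    "\<And>e. e \<in> E \<Longrightarrow> \<exists>i\<in>I. e \<subseteq> B i" "\<And>v. v \<in> V \<Longrightarrow> connected_on F {i \<in> I. v \<in> B i}"
  using assms unfolding tree_decomposition_def by blast+

lemma tree_decompositionI:
  assumes "is_tree I F" "\<And>i. i \<in> I \<Longrightarrow> B i \<subseteq> V" "\<And>v. v \<in> V \<Longrightarrow> \<exists>i\<in>I. v \<in> B i"
    "\<And>e. e \<in> E \<Longrightarrow> \<exists>i\<in>I. e \<subseteq> B i" "\<And>v. v \<in> V \<Longrightarrow> connected_on F {i \<in> I. v \<in> B i}"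
  shows "tree_decomposition V E I F B"
  using assms unfolding tree_decomposition_def by blast

lemma tree_decomposition_restrict:
  assumes td: "tree_decomposition V E I F B" and "W \<subseteq> V" "E' \<subseteq> E" "\<forall>e\<in>E'. e \<subseteq> W"
  shows "tree_decomposition W E' I F (\<lambda>i. B i \<inter> W)"
proof (rule tree_decompositionI)
  show "is_tree I F" by (rule tree_decompositionD(1)[OF td])
next
  fix v assume "v \<in> W"
  then obtain i where "i \<in> I" "v \<in> B i" using tree_decompositionD(3)[OF td] assms(2) by blast
  then show "\<exists>i\<in>I. v \<in> B i \<inter> W" using \<open>v \<in> W\<close> by blast
next
  fix e assume "e \<in> E'"
  then obtain i where "i \<in> I" "e \<subseteq> B i" using tree_decompositionD(4)[OF td] assms(3) by blast
  then show "\<exists>i\<in>I. e \<subseteq> B i \<inter> W" using \<open>e \<in> E'\<close> assms(4) by blast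
next
  fix v assume "v \<in> W"
  moreover have "{i \<in> I. v \<in> B i \<inter> W} = {i \<in> I. v \<in> B i}" using \<open>v \<in> W\<close> by blast
  ultimately show "connected_on F {i \<in> I. v \<in> B i \<inter> W}"
    using tree_decompositionD(5)[OF td] assms(2) by auto
qed blast

lemma tw_le_restrict:
  assumes "tw_le V E k" "finite V" "W \<subseteq> V" "E' \<subseteq> E" "\<forall>e\<in>E'. e \<subseteq> W"
  shows "tw_le W E' k"
proof -
  obtain I :: "nat set" and F B where td: "tree_decomposition V E I F B"
    and w: "\<forall>i\<in>I. card (B i) \<le> k + 1"
    using assms(1) unfolding tw_le_def by blast
  have "card (B i \<inter> W) \<le> k + 1" if "i \<in> I" for i
  proof -
    have "finite (B i)" using tree_decompositionD(2)[OF td that] assms(2) finite_subset by blast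
    then show ?thesis using w that card_mono[of "B i" "B i \<inter> W"] by force
  qed
  then show ?thesis
    using tree_decomposition_restrict[OF td assms(3-5)] unfolding tw_le_def by blast
qed

lemma tree_decomposition_relabel:
  assumes td: "tree_decomposition V E I F B" and f: "inj f"
  shows "tree_decomposition V E (f ` I) ((`) f ` F) (\<lambda>i. B (inv f i))"
proof -
  have inv: "inv f (f i) = i" for i using f by simp
  have S: "{i' \<in> f ` I. v \<in> B (inv f i')} = f ` {i \<in> I. v \<in> B i}" for v
    using inv by auto
  show ?thesis
  proof (rule tree_decompositionI)
    show "is_tree (f ` I) ((`) f ` F)" by (rule is_tree_image[OF tree_decompositionD(1)[OF td] f])
  next
    fix v assume "v \<in> V"
    then show "connected_on ((`) f ` F) {i \<in> f ` I. v \<in> B (inv f i)}"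
      unfolding S using tree_decompositionD(5)[OF td] connected_on_image[OF _ f] by blast
  next
    fix i' assume "i' \<in> f ` I"
    then obtain i where "i \<in> I" "i' = f i" by blast
    then show "B (inv f i') \<subseteq> V" using tree_decompositionD(2)[OF td] inv by simp
  next
    fix v assume "v \<in> V"
    then obtain i where "i \<in> I" "v \<in> B i" using tree_decompositionD(3)[OF td] by blast
    then show "\<exists>i\<in>f ` I. v \<in> B (inv f i)" using inv by (intro bexI[of _ "f i"]) auto
  next
    fix e assume "e \<in> E"
    then obtain i where "i \<in> I" "e \<subseteq> B i" using tree_decompositionD(4)[OF td] by blast
    then show "\<exists>i\<in>f ` I. e \<subseteq> B (inv f i)" using inv by (intro bexI[of _ "f i"]) auto
  qed
qed

lemma tree_decomposition_clique_bag:
  assumes td: "tree_decomposition V E I F B" and "C \<subseteq> V" "C \<subseteq> {u, v}"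
    and "u \<in> C \<Longrightarrow> v \<in> C \<Longrightarrow> u \<noteq> v \<Longrightarrow> {u, v} \<in> E"
  shows "\<exists>i\<in>I. C \<subseteq> B i"
proof -
  consider "C = {}" | "C = {u}" | "C = {v}" | "C = {u, v}" "u \<noteq> v" using assms(3) by blast
  then show ?thesis
  proof cases
    case 1
    then show ?thesis using tree_decompositionD(1)[OF td] unfolding is_tree_def by blast
  next
    case 4
    then show ?thesis using assms(4) tree_decompositionD(4)[OF td] by blast
  qed (use assms(2) tree_decompositionD(3)[OF td] in blast)+
qed

lemma tree_decomposition_glue:
  assumes td1: "tree_decomposition V1 E1 I1 F1 B1" and td2: "tree_decomposition V2 E2 I2 F2 B2"
    and dis: "I1 \<inter> I2 = {}" and a: "a \<in> I1" and b: "b \<in> I2"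
    and Ca: "V1 \<inter> V2 \<subseteq> B1 a" and Cb: "V1 \<inter> V2 \<subseteq> B2 b"
  shows "tree_decomposition (V1 \<union> V2) (E1 \<union> E2) (I1 \<union> I2) (insert {a, b} (F1 \<union> F2))
           (\<lambda>i. if i \<in> I1 then B1 i else B2 i)"
proof (rule tree_decompositionI)
  let ?F = "insert {a, b} (F1 \<union> F2)"
  let ?B = "\<lambda>i. if i \<in> I1 then B1 i else B2 i"
  fix v assume "v \<in> V1 \<union> V2"
  have bags: "{i \<in> I1 \<union> I2. v \<in> ?B i} = {i \<in> I1. v \<in> B1 i} \<union> {i \<in> I2. v \<in> B2 i}"
    using dis by auto
  have "connected_on F1 {i \<in> I1. v \<in> B1 i} \<or> {i \<in> I1. v \<in> B1 i} = {}"
    using tree_decompositionD(2,5)[OF td1] by blast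
  moreover have "connected_on F2 {i \<in> I2. v \<in> B2 i} \<or> {i \<in> I2. v \<in> B2 i} = {}"
    using tree_decompositionD(2,5)[OF td2] by blast
  moreover have "a \<in> {i \<in> I1. v \<in> B1 i} \<and> b \<in> {i \<in> I2. v \<in> B2 i}"
    if "{i \<in> I1. v \<in> B1 i} \<noteq> {}" "{i \<in> I2. v \<in> B2 i} \<noteq> {}"
    using that tree_decompositionD(2)[OF td1] tree_decompositionD(2)[OF td2] a b Ca Cb by blast
  ultimately show "connected_on ?F {i \<in> I1 \<union> I2. v \<in> ?B i}"
    unfolding bags by (rule connected_on_join)
next
  show "is_tree (I1 \<union> I2) (insert {a, b} (F1 \<union> F2))"
    using is_tree_join[OF tree_decompositionD(1)[OF td1] tree_decompositionD(1)[OF td2] dis a b] .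
next
  fix i assume "i \<in> I1 \<union> I2"
  then show "(if i \<in> I1 then B1 i else B2 i) \<subseteq> V1 \<union> V2"
    using tree_decompositionD(2)[OF td1] tree_decompositionD(2)[OF td2] by (cases "i \<in> I1") auto
next
  fix v assume "v \<in> V1 \<union> V2"
  then show "\<exists>i\<in>I1 \<union> I2. v \<in> (if i \<in> I1 then B1 i else B2 i)"
  proof
    assume "v \<in> V1"
    then obtain i where "i \<in> I1" "v \<in> B1 i" using tree_decompositionD(3)[OF td1] by blast
    then show ?thesis by (intro bexI[of _ i]) auto
  next
    assume "v \<in> V2"
    then obtain i where "i \<in> I2" "v \<in> B2 i" using tree_decompositionD(3)[OF td2] by blast
    then show ?thesis using dis by (intro bexI[of _ i]) auto
  qed
next
  fix e assume "e \<in> E1 \<union> E2"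
  then show "\<exists>i\<in>I1 \<union> I2. e \<subseteq> (if i \<in> I1 then B1 i else B2 i)"
  proof
    assume "e \<in> E1"
    then obtain i where "i \<in> I1" "e \<subseteq> B1 i" using tree_decompositionD(4)[OF td1] by blast
    then show ?thesis by (intro bexI[of _ i]) auto
  next
    assume "e \<in> E2"
    then obtain i where "i \<in> I2" "e \<subseteq> B2 i" using tree_decompositionD(4)[OF td2] by blast
    then show ?thesis using dis by (intro bexI[of _ i]) auto
  qed
qed

text \<open>Tree nodes are natural numbers, so the two trees are first moved to the even and the odd
  numbers.\<close>
lemma tw_le_glue:
  assumes "tw_le V1 E1 k" "tw_le V2 E2 k" "V1 \<inter> V2 \<subseteq> {u, v}"
    and "u \<in> V1 \<inter> V2 \<Longrightarrow> v \<in> V1 \<inter> V2 \<Longrightarrow> u \<noteq> v \<Longrightarrow> {u, v} \<in> E1 \<and> {u, v} \<in> E2"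
  shows "tw_le (V1 \<union> V2) (E1 \<union> E2) k"
proof -
  obtain I1 :: "nat set" and F1 B1 where td1: "tree_decomposition V1 E1 I1 F1 B1"
    and w1: "\<forall>i\<in>I1. card (B1 i) \<le> k + 1" using assms(1) unfolding tw_le_def by blast
  obtain I2 :: "nat set" and F2 B2 where td2: "tree_decomposition V2 E2 I2 F2 B2"
    and w2: "\<forall>i\<in>I2. card (B2 i) \<le> k + 1" using assms(2) unfolding tw_le_def by blast
  let ?f = "\<lambda>i::nat. 2 * i" and ?g = "\<lambda>i::nat. 2 * i + 1"
  have inj: "inj ?f" "inj ?g" by (auto intro: injI)
  note t1 = tree_decomposition_relabel[OF td1 inj(1)]
  note t2 = tree_decomposition_relabel[OF td2 inj(2)]
  have dis: "?f ` I1 \<inter> ?g ` I2 = {}" by auto presburger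
  obtain a where a: "a \<in> ?f ` I1" "V1 \<inter> V2 \<subseteq> B1 (inv ?f a)"
    using tree_decomposition_clique_bag[OF t1, of "V1 \<inter> V2" u v] assms(3,4) by blast
  obtain b where b: "b \<in> ?g ` I2" "V1 \<inter> V2 \<subseteq> B2 (inv ?g b)"
    using tree_decomposition_clique_bag[OF t2, of "V1 \<inter> V2" u v] assms(3,4) by blast
  have "card (if i \<in> ?f ` I1 then B1 (inv ?f i) else B2 (inv ?g i)) \<le> k + 1"
    if "i \<in> ?f ` I1 \<union> ?g ` I2" for i
    using that dis w1 w2 inv_f_f[OF inj(1)] inv_f_f[OF inj(2)] by auto
  then show ?thesis
    using tree_decomposition_glue[OF t1 t2 dis a(1) b(1) a(2) b(2)] unfolding tw_le_def by blast
qed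

lemma tw_le_glue_induced:
  assumes "tw_le A (induced_edges E A) k" "tw_le B (induced_edges E B) k" "A \<inter> B \<subseteq> {u, v}"
    and "u \<in> A \<inter> B \<Longrightarrow> v \<in> A \<inter> B \<Longrightarrow> u \<noteq> v \<Longrightarrow> {u, v} \<in> E"
    and "\<And>e. e \<in> E \<Longrightarrow> e \<subseteq> A \<union> B \<Longrightarrow> e \<subseteq> A \<or> e \<subseteq> B"
  shows "tw_le (A \<union> B) (induced_edges E (A \<union> B)) k"
proof -
  have "induced_edges E (A \<union> B) = induced_edges E A \<union> induced_edges E B"
    using assms(5) unfolding induced_edges_def by blast
  moreover have "tw_le (A \<union> B) (induced_edges E A \<union> induced_edges E B) k"
    by (rule tw_le_glue[OF assms(1-3)]) (use assms(4) in \<open>auto simp: induced_edges_def\<close>)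
  ultimately show ?thesis by simp
qed

section \<open>Clique minors\<close>

lemma connected_on_bags_meeting:
  assumes td: "tree_decomposition W E I F B" and X: "X \<subseteq> W" and c: "connected_on E X"
  shows "connected_on F {i \<in> I. X \<inter> B i \<noteq> {}}"
proof -
  let ?T = "{i \<in> I. X \<inter> B i \<noteq> {}}"
  have same_vertex: "(adj_in F ?T)\<^sup>*\<^sup>* i i'" if "x \<in> X" "i \<in> I" "x \<in> B i" "i' \<in> I" "x \<in> B i'" for x i i'
  proof (rule walk_mono[OF _ order_refl])
    show "(adj_in F {i \<in> I. x \<in> B i})\<^sup>*\<^sup>* i i'"
      using tree_decompositionD(5)[OF td] X that unfolding connected_on_def by blast
    show "{i \<in> I. x \<in> B i} \<subseteq> ?T" using that(1) by blast
  qed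
  have along_walk: "\<forall>i\<in>I. \<forall>i'\<in>I. x \<in> B i \<longrightarrow> y \<in> B i' \<longrightarrow> (adj_in F ?T)\<^sup>*\<^sup>* i i'"
    if "(adj_in E X)\<^sup>*\<^sup>* x y" "x \<in> X" for x y
    using that
  proof (induction rule: rtranclp_induct)
    case base then show ?case using same_vertex by blast
  next
    case (step y z)
    show ?case
    proof (intro ballI impI)
      fix i i' assume ii: "i \<in> I" "i' \<in> I" "x \<in> B i" "z \<in> B i'"
      obtain m where m: "m \<in> I" "{y, z} \<subseteq> B m" using tree_decompositionD(4)[OF td] step(2) by blast
      have "(adj_in F ?T)\<^sup>*\<^sup>* i m" using step(3)[OF step(4)] ii m by blast
      moreover have "(adj_in F ?T)\<^sup>*\<^sup>* m i'" using same_vertex[of z m i'] step(2) ii m by blast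
      ultimately show "(adj_in F ?T)\<^sup>*\<^sup>* i i'" by (rule rtranclp_trans)
    qed
  qed
  show ?thesis
    unfolding connected_on_def
  proof (intro ballI)
    fix i i' assume "i \<in> ?T" "i' \<in> ?T"
    then obtain x y where "x \<in> X" "x \<in> B i" "y \<in> X" "y \<in> B i'" "i \<in> I" "i' \<in> I" by blast
    moreover from this have "(adj_in E X)\<^sup>*\<^sup>* x y" using c unfolding connected_on_def by blast
    ultimately show "(adj_in F ?T)\<^sup>*\<^sup>* i i'" using along_walk by blast
  qed
qed

definition adjacent_sets :: "'a set set \<Rightarrow> 'a set \<Rightarrow> 'a set \<Rightarrow> bool" where
  "adjacent_sets E A B \<longleftrightarrow> (\<exists>a\<in>A. \<exists>b\<in>B. {a, b} \<in> E)"

lemma adjacent_setsI: "a \<in> A \<Longrightarrow> b \<in> B \<Longrightarrow> {a, b} \<in> E \<Longrightarrow> adjacent_sets E A B"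
  unfolding adjacent_sets_def by blast

lemma adjacent_sets_sym: "adjacent_sets E A B \<Longrightarrow> adjacent_sets E B A"
  unfolding adjacent_sets_def by (metis insert_commute)

text \<open>The subtrees of bags meeting the branch sets pairwise intersect, so by the Helly property one
  bag meets all branch sets.\<close>
lemma clique_minor_card_le:
  assumes tw: "tw_le W E k" and fin: "finite W"
    and branch: "\<forall>X\<in>\<X>. X \<subseteq> W \<and> X \<noteq> {} \<and> connected_on E X"
    and clique: "\<forall>X\<in>\<X>. \<forall>Y\<in>\<X>. X \<noteq> Y \<longrightarrow> X \<inter> Y = {} \<and> adjacent_sets E X Y"
  shows "card \<X> \<le> k + 1"
proof -
  obtain I :: "nat set" and F B where td: "tree_decomposition W E I F B"
    and w: "\<forall>i\<in>I. card (B i) \<le> k + 1" using tw unfolding tw_le_def by blast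
  let ?T = "\<lambda>X. {i \<in> I. X \<inter> B i \<noteq> {}}"
  have subtrees: "\<forall>X\<in>\<X>. ?T X \<subseteq> I \<and> ?T X \<noteq> {} \<and> connected_on F (?T X)"
  proof
    fix X assume "X \<in> \<X>"
    then have X: "X \<subseteq> W" "X \<noteq> {}" "connected_on E X" using branch by auto
    then obtain x where "x \<in> X" by blast
    then obtain i where "i \<in> I" "x \<in> B i" using tree_decompositionD(3)[OF td] X(1) by blast
    then have "?T X \<noteq> {}" using \<open>x \<in> X\<close> by blast
    then show "?T X \<subseteq> I \<and> ?T X \<noteq> {} \<and> connected_on F (?T X)"
      using connected_on_bags_meeting[OF td X(1) X(3)] by blast
  qed
  have meet: "\<forall>X\<in>\<X>. \<forall>Y\<in>\<X>. ?T X \<inter> ?T Y \<noteq> {}"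
  proof (intro ballI)
    fix X Y assume XY: "X \<in> \<X>" "Y \<in> \<X>"
    show "?T X \<inter> ?T Y \<noteq> {}"
    proof (cases "X = Y")
      case False
      then obtain a b where ab: "a \<in> X" "b \<in> Y" "{a, b} \<in> E"
        using clique XY unfolding adjacent_sets_def by blast
      then obtain i where "i \<in> I" "{a, b} \<subseteq> B i" using tree_decompositionD(4)[OF td] by blast
      then show ?thesis using ab by blast
    qed (use subtrees XY in auto)
  qed
  obtain i where i: "i \<in> I" "\<forall>X\<in>\<X>. X \<inter> B i \<noteq> {}"
    using subtrees_Helly[OF tree_decompositionD(1)[OF td] subtrees meet] by blast
  define g where "g X = (SOME x. x \<in> X \<inter> B i)" for X
  have g: "g X \<in> X \<inter> B i" if "X \<in> \<X>" for X
  proof -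
    have "\<exists>x. x \<in> X \<inter> B i" using i(2) that by blast
    then show ?thesis unfolding g_def by (rule someI_ex)
  qed
  have inj: "inj_on g \<X>"
  proof (rule inj_onI, rule ccontr)
    fix X Y assume XY: "X \<in> \<X>" "Y \<in> \<X>" "X \<noteq> Y" and "g X = g Y"
    have "X \<inter> Y = {}" using clique XY(1,2) XY(3) by simp
    moreover have "g X \<in> X \<inter> Y" using g[OF XY(1)] g[OF XY(2)] \<open>g X = g Y\<close> by simp
    ultimately show False by simp
  qed
  have "finite (B i)" using finite_subset[OF tree_decompositionD(2)[OF td i(1)] fin] .
  have "card \<X> = card (g ` \<X>)" using card_image[OF inj] by simp
  also have "\<dots> \<le> card (B i)" by (rule card_mono[OF \<open>finite (B i)\<close>]) (use g in blast)
  also have "\<dots> \<le> k + 1" using w i(1) by blast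
  finally show ?thesis .
qed

lemma tw_le_2_no_K4_minor:
  assumes tw: "tw_le W E 2" and fin: "finite W"
    and sub: "A \<subseteq> W" "B \<subseteq> W" "C \<subseteq> W" "D \<subseteq> W"
    and ne: "A \<noteq> {}" "B \<noteq> {}" "C \<noteq> {}" "D \<noteq> {}"
    and con: "connected_on E A" "connected_on E B" "connected_on E C" "connected_on E D"
    and dis: "A \<inter> B = {}" "A \<inter> C = {}" "A \<inter> D = {}" "B \<inter> C = {}" "B \<inter> D = {}" "C \<inter> D = {}"
    and adj: "adjacent_sets E A B" "adjacent_sets E A C" "adjacent_sets E A D"
      "adjacent_sets E B C" "adjacent_sets E B D" "adjacent_sets E C D"
  shows False
proof -
  have "A \<noteq> B" "A \<noteq> C" "A \<noteq> D" "B \<noteq> C" "B \<noteq> D" "C \<noteq> D" using ne dis by auto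
  then have "card {A, B, C, D} = 4" by (simp add: card_insert_if)
  moreover have "card {A, B, C, D} \<le> 2 + 1"
  proof (rule clique_minor_card_le[OF tw fin])
    show "\<forall>X\<in>{A, B, C, D}. X \<subseteq> W \<and> X \<noteq> {} \<and> connected_on E X" using sub ne con by blast
    show "\<forall>X\<in>{A, B, C, D}. \<forall>Y\<in>{A, B, C, D}. X \<noteq> Y \<longrightarrow> X \<inter> Y = {} \<and> adjacent_sets E X Y"
      using dis adj adjacent_sets_sym[OF adj(1)] adjacent_sets_sym[OF adj(2)]
        adjacent_sets_sym[OF adj(3)] adjacent_sets_sym[OF adj(4)] adjacent_sets_sym[OF adj(5)]
        adjacent_sets_sym[OF adj(6)]
      by (auto simp: Int_commute)
  qed
  ultimately show False by simp
qed

section \<open>The ladder\<close>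

lemma card_Int_le_add:
  assumes "finite S" "X \<subseteq> Y \<union> Z"
  shows "card (S \<inter> X) \<le> card (S \<inter> Y) + card (S \<inter> Z)"
proof -
  have "card (S \<inter> X) \<le> card ((S \<inter> Y) \<union> (S \<inter> Z))"
    by (rule card_mono) (use assms in auto)
  also have "\<dots> \<le> card (S \<inter> Y) + card (S \<inter> Z)" by (rule card_Un_le)
  finally show ?thesis .
qed

lemma simple_graph_edge_subset: "simple_graph V E \<Longrightarrow> e \<in> E \<Longrightarrow> e \<subseteq> V"
  unfolding simple_graph_def by fastforce

lemma del_edges_eq_induced_edges:
  "simple_graph V E \<Longrightarrow> del_edges E S = induced_edges E (V - S)"
  using simple_graph_edge_subset unfolding del_edges_def induced_edges_def by blast

lemma tw_le_delete_edge:
  assumes "simple_graph V E" "tw_le (V - S) (del_edges E S) k"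
  shows "tw_le (V - S) (del_edges (E - {e}) S) k"
proof (rule tw_le_restrict[OF assms(2)])
  show "finite (V - S)" using assms(1) unfolding simple_graph_def by simp
  show "\<forall>e'\<in>del_edges (E - {e}) S. e' \<subseteq> V - S"
    using simple_graph_edge_subset[OF assms(1)] unfolding del_edges_def by blast
qed (auto simp: del_edges_def)

locale ladder =
  fixes V :: "'a set" and E :: "'a set set" and p q :: "nat \<Rightarrow> 'a"
  assumes simple: "simple_graph V E"
    and path_p: "induced_path V E p 9"
    and path_q: "induced_path V E q 9"
    and rails_disjoint: "p ` {1..9} \<inter> q ` {1..9} = {}"
    and rungs: "\<forall>i\<in>{1..9}. {p i, q i} \<in> E"
    and tw_ladder: "tw_le (p ` {1..9} \<union> q ` {1..9}) (induced_edges E (p ` {1..9} \<union> q ` {1..9})) 2"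
    and only_corners_attach: "\<forall>v \<in> p ` {1..9} \<union> q ` {1..9}.
           (\<exists>w \<in> V - (p ` {1..9} \<union> q ` {1..9}). {v, w} \<in> E) \<longrightarrow> v \<in> {p 1, p 9, q 1, q 9}"
begin

definition rails :: "'a set" where
  "rails = p ` {1..9} \<union> q ` {1..9}"

abbreviation H :: "'a set \<Rightarrow> 'a set set" where
  "H S \<equiv> del_edges (E - {{p 5, q 5}}) S"

lemma finite_V: "finite V"
  using simple unfolding simple_graph_def by blast

lemma edgeE:
  assumes "e \<in> E"
  obtains a b where "e = {a, b}" "a \<in> V" "b \<in> V"
  using assms simple unfolding simple_graph_def by blast

lemma p_eq_iff [simp]: "i \<in> {1..9} \<Longrightarrow> j \<in> {1..9} \<Longrightarrow> p i = p j \<longleftrightarrow> i = j"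
  using path_p unfolding induced_path_def inj_on_def by blast

lemma q_eq_iff [simp]: "i \<in> {1..9} \<Longrightarrow> j \<in> {1..9} \<Longrightarrow> q i = q j \<longleftrightarrow> i = j"
  using path_q unfolding induced_path_def inj_on_def by blast

lemma p_neq_q [simp]: "i \<in> {1..9} \<Longrightarrow> j \<in> {1..9} \<Longrightarrow> p i \<noteq> q j"
  using rails_disjoint by blast

lemma q_neq_p [simp]: "i \<in> {1..9} \<Longrightarrow> j \<in> {1..9} \<Longrightarrow> q i \<noteq> p j"
  using rails_disjoint by blast

lemma p_in_rails [simp]: "i \<in> {1..9} \<Longrightarrow> p i \<in> rails"
  and q_in_rails [simp]: "i \<in> {1..9} \<Longrightarrow> q i \<in> rails"
  unfolding rails_def by auto

lemma rails_subset_V: "rails \<subseteq> V"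
  using path_p path_q unfolding induced_path_def rails_def by blast

lemma p_edge: "i \<in> {1..8} \<Longrightarrow> {p i, p (Suc i)} \<in> E"
  using path_p unfolding induced_path_def by (simp add: Ball_def)

lemma q_edge: "i \<in> {1..8} \<Longrightarrow> {q i, q (Suc i)} \<in> E"
  using path_q unfolding induced_path_def by (simp add: Ball_def)

lemma rung_edge: "i \<in> {1..9} \<Longrightarrow> {p i, q i} \<in> E"
  using rungs by blast

lemma attachment_is_corner:
  assumes "a \<in> V - rails" "b \<in> rails" "{a, b} \<in> E"
  shows "b \<in> {p 1, q 1, p 9, q 9}"
proof -
  have "{b, a} \<in> E" using assms(3) by (simp add: insert_commute)
  then show ?thesis using only_corners_attach assms(1,2) unfolding rails_def by blast
qed

end

lemma image_reverse_1_9: "(\<lambda>i. f (10 - i)) ` {1..9::nat} = f ` {1..9}"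
proof -
  have "(\<lambda>i::nat. 10 - i) ` {1..9} = {1..9}"
  proof
    show "{1..9} \<subseteq> (\<lambda>i::nat. 10 - i) ` {1..9}"
    proof
      fix x :: nat assume "x \<in> {1..9}"
      then have "x = 10 - (10 - x)" "10 - x \<in> {1..9}" by auto
      then show "x \<in> (\<lambda>i. 10 - i) ` {1..9}" by blast
    qed
  qed auto
  then show ?thesis by (metis image_image)
qed

lemma induced_path_reverse:
  assumes "induced_path V E p 9"
  shows "induced_path V E (\<lambda>i. p (10 - i)) 9"
  unfolding induced_path_def
proof (intro conjI)
  have inj: "inj_on p {1..9}" using assms unfolding induced_path_def by blast
  show "inj_on (\<lambda>i. p (10 - i)) {1..9}"
  proof (rule inj_onI)
    fix x y :: nat assume "x \<in> {1..9}" "y \<in> {1..9}" "p (10 - x) = p (10 - y)"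
    moreover from this have "10 - x \<in> {1..9}" "10 - y \<in> {1..9}" by auto
    ultimately have "10 - x = 10 - y" using inj_onD[OF inj] by blast
    then show "x = y" using \<open>x \<in> {1..9}\<close> \<open>y \<in> {1..9}\<close> by auto
  qed
  show "(\<lambda>i. p (10 - i)) ` {1..9} \<subseteq> V"
    unfolding image_reverse_1_9 using assms unfolding induced_path_def by blast
  show "\<forall>i\<in>{1..9}. \<forall>j\<in>{1..9}. ({p (10 - i), p (10 - j)} \<in> E) = (i = j + 1 \<or> j = i + 1)"
  proof (intro ballI)
    fix i j :: nat assume ij: "i \<in> {1..9}" "j \<in> {1..9}"
    then have "10 - i \<in> {1..9}" "10 - j \<in> {1..9}" by auto
    then have "({p (10 - i), p (10 - j)} \<in> E) = (10 - i = 10 - j + 1 \<or> 10 - j = 10 - i + 1)"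
      using assms unfolding induced_path_def by blast
    also have "\<dots> = (i = j + 1 \<or> j = i + 1)" using ij by auto
    finally show "({p (10 - i), p (10 - j)} \<in> E) = (i = j + 1 \<or> j = i + 1)" .
  qed
qed

lemma ladder_swap:
  assumes "ladder V E p q"
  shows "ladder V E q p"
proof -
  interpret ladder V E p q by fact
  show ?thesis
  proof
    show "q ` {1..9} \<inter> p ` {1..9} = {}" using rails_disjoint by blast
    show "\<forall>i\<in>{1..9}. {q i, p i} \<in> E" using rungs by (simp add: insert_commute)
    show "tw_le (q ` {1..9} \<union> p ` {1..9}) (induced_edges E (q ` {1..9} \<union> p ` {1..9})) 2"
      using tw_ladder by (simp add: Un_commute)
    show "\<forall>v\<in>q ` {1..9} \<union> p ` {1..9}. (\<exists>w\<in>V - (q ` {1..9} \<union> p ` {1..9}). {v, w} \<in> E) \<longrightarrow>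
        v \<in> {q 1, q 9, p 1, p 9}"
    proof -
      have "q ` {1..9} \<union> p ` {1..9} = p ` {1..9} \<union> q ` {1..9}"
        "{q 1, q 9, p 1, p 9} = {p 1, p 9, q 1, q 9}" by blast+
      then show ?thesis using only_corners_attach by presburger
    qed
  qed (fact simple path_q path_p)+
qed

lemma ladder_reverse:
  assumes "ladder V E p q"
  shows "ladder V E (\<lambda>i. p (10 - i)) (\<lambda>i. q (10 - i))"
proof -
  interpret ladder V E p q by fact
  show ?thesis
  proof
    show "\<forall>i\<in>{1..9}. {p (10 - i), q (10 - i)} \<in> E"
    proof
      fix i :: nat assume "i \<in> {1..9}"
      then have "10 - i \<in> {1..9}" by auto
      then show "{p (10 - i), q (10 - i)} \<in> E" by (rule rung_edge)
    qed
    show "\<forall>v\<in>(\<lambda>i. p (10 - i)) ` {1..9} \<union> (\<lambda>i. q (10 - i)) ` {1..9}.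
       (\<exists>w\<in>V - ((\<lambda>i. p (10 - i)) ` {1..9} \<union> (\<lambda>i. q (10 - i)) ` {1..9}). {v, w} \<in> E) \<longrightarrow>
       v \<in> {p (10 - 1), p (10 - 9), q (10 - 1), q (10 - 9)}"
    proof -
      have "{p (10 - 1), p (10 - 9), q (10 - 1), q (10 - 9)} = {p 1, p 9, q 1, q 9}" by auto
      then show ?thesis unfolding image_reverse_1_9 using only_corners_attach by presburger
    qed
    show "(\<lambda>i. p (10 - i)) ` {1..9} \<inter> (\<lambda>i. q (10 - i)) ` {1..9} = {}"
      unfolding image_reverse_1_9 by (rule rails_disjoint)
    show "tw_le ((\<lambda>i. p (10 - i)) ` {1..9} \<union> (\<lambda>i. q (10 - i)) ` {1..9})
       (induced_edges E ((\<lambda>i. p (10 - i)) ` {1..9} \<union> (\<lambda>i. q (10 - i)) ` {1..9})) 2"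
      unfolding image_reverse_1_9 by (rule tw_ladder)
  qed (use simple induced_path_reverse path_p path_q in blast)+
qed

context ladder
begin

lemma rails_reverse: "ladder.rails (\<lambda>i. p (10 - i)) (\<lambda>i. q (10 - i)) = rails"
  using ladder.rails_def[OF ladder_reverse[OF ladder_axioms]] unfolding rails_def image_reverse_1_9 .

lemma corners_distinct: "{p 1, q 1} \<inter> {p 9, q 9} = {}"
  by auto

lemma corners_rails: "{p 1, q 1} \<subseteq> rails" "{p 9, q 9} \<subseteq> rails"
  by simp_all

lemma no_edge_across:
  assumes "\<forall>x\<in>A - B. \<forall>y\<in>B - A. {x, y} \<notin> E" "e \<in> E" "e \<subseteq> A \<union> B"
  shows "e \<subseteq> A \<or> e \<subseteq> B"
proof (rule ccontr)
  obtain a b where e: "e = {a, b}" using edgeE[OF assms(2)] by blast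
  assume "\<not> ?thesis"
  then consider "a \<in> A - B" "b \<in> B - A" | "b \<in> A - B" "a \<in> B - A" using assms(3) e by auto
  then show False
  proof cases
    case 1
    then show False using assms(1) assms(2)[unfolded e] by blast
  next
    case 2
    moreover have "{b, a} \<in> E" using assms(2) e by (simp add: insert_commute)
    ultimately show False using assms(1) by blast
  qed
qed

lemma tw_le_induced_avoiding_p5:
  assumes "tw_le (V - S) (H S) 2" "X \<subseteq> V - S" "p 5 \<notin> X"
  shows "tw_le X (induced_edges E X) 2"
proof (rule tw_le_restrict[OF assms(1)])
  show "finite (V - S)" using finite_V by simp
  show "induced_edges E X \<subseteq> H S"
    using assms(2,3) unfolding induced_edges_def del_edges_def by blast
qed (use assms(2) in \<open>auto simp: induced_edges_def\<close>)

lemma finite_rails: "finite rails"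
  unfolding rails_def by simp

lemma tw_le_rails: "tw_le W (induced_edges E W) 2" if "W \<subseteq> rails"
  by (rule tw_le_restrict[OF tw_ladder[folded rails_def]])
    (use that finite_rails in \<open>auto simp: induced_edges_def\<close>)

text \<open>The graph minus S splits into a left side attached at the corners p 1, q 1, the remaining
  ladder, and a right side attached at p 9, q 9; the attachments are rungs, so treewidth 2
  survives the gluing.\<close>
lemma tw_le_from_sides:
  assumes part: "Ol \<union> Or = V - rails - S" "Ol \<inter> Or = {}"
    and sep_left: "\<forall>a\<in>Ol. \<forall>b\<in>Or \<union> ({p 9, q 9} - S). {a, b} \<notin> E"
    and sep_right: "\<forall>a\<in>Or. \<forall>b\<in>{p 1, q 1} - S. {a, b} \<notin> E"
    and tw_left: "tw_le (Ol \<union> ({p 1, q 1} - S)) (induced_edges E (Ol \<union> ({p 1, q 1} - S))) 2"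
    and tw_right: "tw_le (Or \<union> ({p 9, q 9} - S)) (induced_edges E (Or \<union> ({p 9, q 9} - S))) 2"
  shows "tw_le (V - S) (del_edges E S) 2"
proof -
  define A where "A = Ol \<union> ({p 1, q 1} - S)"
  define B where "B = rails - S"
  define C where "C = Or \<union> ({p 9, q 9} - S)"
  have out: "Ol \<inter> rails = {}" "Or \<inter> rails = {}" using part(1) by blast+
  have corner: "y \<in> {p 1, q 1, p 9, q 9}" if "x \<in> Ol \<union> Or" "y \<in> rails" "{x, y} \<in> E" for x y
    using attachment_is_corner[of x y] part(1) that by blast
  have AB: "tw_le (A \<union> B) (induced_edges E (A \<union> B)) 2"
  proof (rule tw_le_glue_induced[where u = "p 1" and v = "q 1"])
    show "tw_le A (induced_edges E A) 2" unfolding A_def by (rule tw_left)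
    show "tw_le B (induced_edges E B) 2" unfolding B_def by (rule tw_le_rails) blast
    show "A \<inter> B \<subseteq> {p 1, q 1}" unfolding A_def B_def using out by blast
    show "{p 1, q 1} \<in> E" using rung_edge[of 1] by simp
    have "\<forall>x\<in>A - B. \<forall>y\<in>B - A. {x, y} \<notin> E"
    proof (intro ballI notI)
      fix x y assume "x \<in> A - B" "y \<in> B - A" "{x, y} \<in> E"
      then have "x \<in> Ol" "y \<in> rails - S" "y \<notin> {p 1, q 1}" unfolding A_def B_def by auto
      with corner[OF _ _ \<open>{x, y} \<in> E\<close>] have "y \<in> {p 9, q 9} - S" by blast
      with sep_left \<open>x \<in> Ol\<close> \<open>{x, y} \<in> E\<close> show False by blast
    qed
    then show "e \<subseteq> A \<or> e \<subseteq> B" if "e \<in> E" "e \<subseteq> A \<union> B" for e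
      by (rule no_edge_across[OF _ that])
  qed
  have "tw_le C (induced_edges E C) 2" unfolding C_def by (rule tw_right)
  with AB have "tw_le ((A \<union> B) \<union> C) (induced_edges E ((A \<union> B) \<union> C)) 2"
  proof (rule tw_le_glue_induced[where u = "p 9" and v = "q 9"])
    show "(A \<union> B) \<inter> C \<subseteq> {p 9, q 9}"
      unfolding A_def B_def C_def using part(2) out corners_distinct corners_rails by blast
    show "{p 9, q 9} \<in> E" using rung_edge[of 9] by simp
    have "\<forall>x\<in>(A \<union> B) - C. \<forall>y\<in>C - (A \<union> B). {x, y} \<notin> E"
    proof (intro ballI notI)
      fix x y assume that: "x \<in> (A \<union> B) - C" "y \<in> C - (A \<union> B)" and xy: "{x, y} \<in> E"
      have "y \<in> Or" using that corners_rails unfolding A_def B_def C_def by blast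
      have "{y, x} \<in> E" using xy by (simp add: insert_commute)
      then have "x \<notin> {p 1, q 1} - S" using sep_right \<open>y \<in> Or\<close> by blast
      moreover have "x \<notin> Ol" using sep_left xy \<open>y \<in> Or\<close> by blast
      moreover have "x \<in> rails \<Longrightarrow> x \<in> {p 1, q 1, p 9, q 9}"
        using corner[OF _ _ \<open>{y, x} \<in> E\<close>] \<open>y \<in> Or\<close> by blast
      ultimately show False using that unfolding A_def B_def C_def by blast
    qed
    then show "e \<subseteq> A \<union> B \<or> e \<subseteq> C" if "e \<in> E" "e \<subseteq> (A \<union> B) \<union> C" for e
      by (rule no_edge_across[OF _ that])
  qed
  moreover have "(A \<union> B) \<union> C = V - S"
    unfolding A_def B_def C_def using part(1) rails_subset_V corners_rails by blast
  ultimately show ?thesis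
    using del_edges_eq_induced_edges[OF simple] by simp
qed

text \<open>Deleting the left corners instead of the interior vertices of S: what remains of the ladder
  hangs at the rung p 9 q 9 only.\<close>
lemma tw_le_cut_left:
  assumes tw: "tw_le (V - S) (H S) 2"
  shows "tw_le (V - ((S - rails) \<union> {p 1, q 1} \<union> (S \<inter> {p 9, q 9})))
    (del_edges E ((S - rails) \<union> {p 1, q 1} \<union> (S \<inter> {p 9, q 9}))) 2"
proof -
  let ?S' = "(S - rails) \<union> {p 1, q 1} \<union> (S \<inter> {p 9, q 9})"
  have left: "{p 1, q 1} - ?S' = {}" by blast
  have right: "{p 9, q 9} - ?S' = {p 9, q 9} - S" using corners_distinct by blast
  show ?thesis
  proof (rule tw_le_from_sides[where Ol = "{}" and Or = "V - rails - S"], unfold left right)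
    show "{} \<union> (V - rails - S) = V - rails - ?S'" using corners_rails by blast
    show "tw_le ({} \<union> {}) (induced_edges E ({} \<union> {})) 2" by (rule tw_le_rails) simp
    show "tw_le (V - rails - S \<union> ({p 9, q 9} - S)) (induced_edges E (V - rails - S \<union> ({p 9, q 9} - S))) 2"
      by (rule tw_le_induced_avoiding_p5[OF tw]) (use rails_subset_V in auto)
  qed simp_all
qed

lemma card_split_rails:
  assumes "finite S"
  shows "card S = card (S - rails) + card (S \<inter> {p 1, q 1}) + card (S \<inter> {p 9, q 9})
    + card (S \<inter> (rails - {p 1, q 1, p 9, q 9}))"
proof -
  let ?C = "(S \<inter> {p 1, q 1}) \<union> (S \<inter> {p 9, q 9})"
  let ?I = "S \<inter> (rails - {p 1, q 1, p 9, q 9})"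
  have "S = (S - rails) \<union> (?C \<union> ?I)" using corners_rails by auto
  also have "card \<dots> = card (S - rails) + card (?C \<union> ?I)"
    by (rule card_Un_disjoint) (use assms in auto)
  also have "card (?C \<union> ?I) = card ?C + card ?I"
    by (rule card_Un_disjoint) (use assms in auto)
  also have "card ?C = card (S \<inter> {p 1, q 1}) + card (S \<inter> {p 9, q 9})"
    by (rule card_Un_disjoint) (use assms corners_distinct in auto)
  finally show ?thesis by simp
qed

lemma has_solution_if_left_heavy:
  assumes S: "S \<subseteq> V" "card S \<le> t" and tw: "tw_le (V - S) (H S) 2"
    and heavy: "2 \<le> card (S \<inter> {p 1, q 1}) + card (S \<inter> (rails - {p 1, q 1, p 9, q 9}))"
  shows "has_solution V E t"
proof -
  let ?S' = "(S - rails) \<union> {p 1, q 1} \<union> (S \<inter> {p 9, q 9})"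
  have "finite S" using S(1) finite_V finite_subset by blast
  have "card ?S' \<le> card (S - rails) + card {p 1, q 1} + card (S \<inter> {p 9, q 9})"
    by (meson add_le_mono card_Un_le le_trans order_refl)
  also have "\<dots> \<le> card S"
    using card_split_rails[OF \<open>finite S\<close>] heavy card_insert_le[of "{q 1}" "p 1"] by simp
  finally have "card ?S' \<le> t" using S(2) by simp
  moreover have "?S' \<subseteq> V" using S(1) rails_subset_V corners_rails by blast
  ultimately show ?thesis
    using tw_le_cut_left[OF tw] unfolding has_solution_def is_solution_def by blast
qed

lemma H_edge: "a \<notin> S \<Longrightarrow> b \<notin> S \<Longrightarrow> {a, b} \<in> E \<Longrightarrow> {a, b} \<noteq> {p 5, q 5} \<Longrightarrow> {a, b} \<in> H S"
  unfolding del_edges_def by auto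

lemma ladder_edges_H:
  shows "i \<in> {1..8} \<Longrightarrow> j = i + 1 \<Longrightarrow> p i \<notin> S \<Longrightarrow> p j \<notin> S \<Longrightarrow> {p i, p j} \<in> H S"
    and "i \<in> {1..8} \<Longrightarrow> j = i + 1 \<Longrightarrow> q i \<notin> S \<Longrightarrow> q j \<notin> S \<Longrightarrow> {q i, q j} \<in> H S"
    and "i \<in> {1..9} \<Longrightarrow> i \<noteq> 5 \<Longrightarrow> p i \<notin> S \<Longrightarrow> q i \<notin> S \<Longrightarrow> {p i, q i} \<in> H S"
  using p_edge q_edge rung_edge by (auto intro!: H_edge simp: doubleton_eq_iff)

text \<open>Branch sets of a K4 minor: Y, p 3, p 4 and the path q 2 q 3 q 4.\<close>
lemma no_K4_through_p5:
  assumes tw: "tw_le (V - S) (H S) 2"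
    and Y: "Y \<subseteq> V - S" "connected_on (H S) Y" "p 2 \<in> Y" "p 5 \<in> Y"
    and free: "p 3 \<notin> S" "p 4 \<notin> S" "q 2 \<notin> S" "q 3 \<notin> S" "q 4 \<notin> S"
    and disj: "Y \<inter> {p 3, p 4, q 2, q 3, q 4} = {}"
  shows False
proof -
  have "p 2 \<notin> S" "p 5 \<notin> S" using Y by auto
  then have e: "{p 2, p 3} \<in> H S" "{p 3, p 4} \<in> H S" "{p 4, p 5} \<in> H S"
    "{q 2, q 3} \<in> H S" "{q 3, q 4} \<in> H S" "{p 2, q 2} \<in> H S" "{p 3, q 3} \<in> H S" "{p 4, q 4} \<in> H S"
    using free by (auto intro!: ladder_edges_H)
  have "connected_on (H S) {q 2, q 3, q 4}"
    using connected_on_insert[OF connected_on_edge[OF e(5)], of "q 3" "q 2"] e(4)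
    by (simp add: insert_commute)
  show False
  proof (rule tw_le_2_no_K4_minor[OF tw _, of Y "{p 3}" "{p 4}" "{q 2, q 3, q 4}"])
    show "finite (V - S)" using finite_V by simp
    show "Y \<subseteq> V - S" "{p 3} \<subseteq> V - S" "{p 4} \<subseteq> V - S" "{q 2, q 3, q 4} \<subseteq> V - S"
      using Y(1) free rails_subset_V by auto
  next
    have "{p 5, p 4} \<in> H S" using e(3) by (simp add: insert_commute)
    then show "adjacent_sets (H S) Y {p 4}" using adjacent_setsI[OF Y(4)] by simp
  qed (use Y(2,3) disj e \<open>connected_on (H S) {q 2, q 3, q 4}\<close> connected_on_singleton
      in \<open>auto intro: adjacent_setsI\<close>)
qed

text \<open>Branch sets of a K4 minor: Y, the paths p 3 p 4 and q 2 q 3, and q 4.\<close>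
lemma no_K4_through_q5:
  assumes tw: "tw_le (V - S) (H S) 2"
    and Y: "Y \<subseteq> V - S" "connected_on (H S) Y" "p 2 \<in> Y" "q 5 \<in> Y"
    and free: "p 3 \<notin> S" "p 4 \<notin> S" "q 2 \<notin> S" "q 3 \<notin> S" "q 4 \<notin> S"
    and disj: "Y \<inter> {p 3, p 4, q 2, q 3, q 4} = {}"
  shows False
proof -
  have "p 2 \<notin> S" "q 5 \<notin> S" using Y by auto
  then have e: "{p 2, p 3} \<in> H S" "{p 3, p 4} \<in> H S" "{q 2, q 3} \<in> H S" "{q 3, q 4} \<in> H S"
    "{q 4, q 5} \<in> H S" "{p 2, q 2} \<in> H S" "{p 3, q 3} \<in> H S" "{p 4, q 4} \<in> H S"
    using free by (auto intro!: ladder_edges_H)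
  have "{q 5, q 4} \<in> H S" using e(5) by (simp add: insert_commute)
  show False
  proof (rule tw_le_2_no_K4_minor[OF tw _, of Y "{p 3, p 4}" "{q 2, q 3}" "{q 4}"])
    show "finite (V - S)" using finite_V by simp
    show "Y \<subseteq> V - S" "{p 3, p 4} \<subseteq> V - S" "{q 2, q 3} \<subseteq> V - S" "{q 4} \<subseteq> V - S"
      using Y(1) free rails_subset_V by auto
    show "adjacent_sets (H S) Y {q 4}" using adjacent_setsI[OF Y(4)] \<open>{q 5, q 4} \<in> H S\<close> by simp
  qed (use Y(2,3) disj e connected_on_edge connected_on_singleton in \<open>auto intro: adjacent_setsI\<close>)
qed

lemma no_K4_through_left:
  assumes "tw_le (V - S) (H S) 2"
    and "Y \<subseteq> V - S" "connected_on (H S) Y" "p 2 \<in> Y" "p 5 \<in> Y \<or> q 5 \<in> Y"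
    and "p 3 \<notin> S" "p 4 \<notin> S" "q 2 \<notin> S" "q 3 \<notin> S" "q 4 \<notin> S"
    and "Y \<inter> {p 3, p 4, q 2, q 3, q 4} = {}"
  shows False
  using assms no_K4_through_p5 no_K4_through_q5 by blast

lemma route_from_p9:
  assumes "p 5 \<notin> S" "q 5 \<notin> S" "p 9 \<notin> S"
    and right: "card (S \<inter> {p 6, p 7, p 8, q 6, q 7, q 8, p 9, q 9}) \<le> 1"
  obtains R where "R \<subseteq> V - S" "connected_on (H S) R" "p 9 \<in> R" "p 5 \<in> R \<or> q 5 \<in> R"
    "R \<subseteq> {p 5, p 6, p 7, p 8, p 9, q 5, q 6, q 7, q 8, q 9}"
proof (cases "p 6 \<notin> S \<and> p 7 \<notin> S \<and> p 8 \<notin> S")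
  case True
  then have "connected_on (H S) (set [p 5, p 6, p 7, p 8, p 9])"
    using assms by (intro connected_on_walk) (auto intro!: ladder_edges_H)
  moreover have "{p 5, p 6, p 7, p 8, p 9} \<subseteq> V - S" using True assms rails_subset_V by auto
  ultimately show ?thesis using that[of "{p 5, p 6, p 7, p 8, p 9}"] by auto
next
  case False
  then obtain k where k: "k \<in> {6, 7, 8}" "p k \<in> S" by auto
  have "x \<notin> S" if "x \<in> {q 6, q 7, q 8, q 9}" for x
  proof
    assume "x \<in> S"
    have "x \<noteq> p k" using that k by auto
    then have "card {p k, x} \<le> card (S \<inter> {p 6, p 7, p 8, q 6, q 7, q 8, p 9, q 9})"
      using k \<open>x \<in> S\<close> that by (intro card_mono) auto
    then show False using right \<open>x \<noteq> p k\<close> by simp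
  qed
  then have free: "q 6 \<notin> S" "q 7 \<notin> S" "q 8 \<notin> S" "q 9 \<notin> S" by auto
  have "{p 9, q 9} \<in> H S" using free assms by (intro ladder_edges_H(3)) auto
  moreover have "{q 9, p 9} = {p 9, q 9}" by blast
  ultimately have "{q 9, p 9} \<in> H S" by simp
  then have "connected_on (H S) (set [q 5, q 6, q 7, q 8, q 9, p 9])"
    using free assms by (intro connected_on_walk) (auto intro!: ladder_edges_H)
  moreover have "{q 5, q 6, q 7, q 8, q 9, p 9} \<subseteq> V - S" using free assms rails_subset_V by auto
  ultimately show ?thesis using that[of "{q 5, q 6, q 7, q 8, q 9, p 9}"] by auto
qed

lemma H_swap: "del_edges (E - {{q 5, p 5}}) S = H S"
  by (simp add: insert_commute)

lemma route_to_middle: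
  assumes "p 5 \<notin> S" "q 5 \<notin> S" "d \<in> {p 9, q 9}" "d \<notin> S"
    and right: "card (S \<inter> {p 6, p 7, p 8, q 6, q 7, q 8, p 9, q 9}) \<le> 1"
  obtains R where "R \<subseteq> V - S" "connected_on (H S) R" "d \<in> R" "p 5 \<in> R \<or> q 5 \<in> R"
    "R \<subseteq> {p 5, p 6, p 7, p 8, p 9, q 5, q 6, q 7, q 8, q 9}"
proof (cases "d = p 9")
  case True
  then show ?thesis using route_from_p9[OF assms(1,2) _ right] that assms(4) by blast
next
  case False
  interpret sw: ladder V E q p by (rule ladder_swap[OF ladder_axioms])
  have "{q 6, q 7, q 8, p 6, p 7, p 8, q 9, p 9} = {p 6, p 7, p 8, q 6, q 7, q 8, p 9, q 9}" by blast
  then obtain R where "R \<subseteq> V - S" "connected_on (H S) R" "q 9 \<in> R" "q 5 \<in> R \<or> p 5 \<in> R"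
    "R \<subseteq> {q 5, q 6, q 7, q 8, q 9, p 5, p 6, p 7, p 8, p 9}"
    using sw.route_from_p9[OF assms(2,1), of thesis] False assms(3,4) right
    unfolding H_swap by auto
  then show ?thesis using that False assms(3) by blast
qed

lemma no_K4_from_corner:
  assumes tw: "tw_le (V - S) (H S) 2"
    and Y: "Y \<subseteq> V - S" "connected_on (H S) Y" "c \<in> Y" "c \<in> {p 1, q 1}" "p 5 \<in> Y \<or> q 5 \<in> Y"
    and disj: "Y \<inter> {p 2, p 3, p 4, q 2, q 3, q 4} = {}"
    and left: "\<forall>k\<in>{2, 3, 4}. p k \<notin> S \<and> q k \<notin> S"
  shows False
proof (cases "c = p 1")
  case True
  have "{p 1, p 2} \<in> H S" using Y(1,3) True left by (intro ladder_edges_H(1)) auto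
  then have "connected_on (H S) (insert (p 2) Y)"
    using connected_on_insert[OF Y(2)] Y(3) True by blast
  then show False
    using no_K4_through_left[OF tw _ _ _ _ _ _ _ _ _, of "insert (p 2) Y"] Y(1,5) disj left
      subsetD[OF rails_subset_V p_in_rails[of 2]]
    by auto
next
  case False
  interpret sw: ladder V E q p by (rule ladder_swap[OF ladder_axioms])
  have "c = q 1" using False Y(4) by blast
  have "{q 1, q 2} \<in> H S" using Y(1,3) \<open>c = q 1\<close> left by (intro ladder_edges_H(2)) auto
  then have "connected_on (H S) (insert (q 2) Y)"
    using connected_on_insert[OF Y(2)] Y(3) \<open>c = q 1\<close> by blast
  then show False
    using sw.no_K4_through_left[of S "insert (q 2) Y"] tw Y(1,5) disj left
      subsetD[OF rails_subset_V q_in_rails[of 2]]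
    unfolding H_swap by auto
qed

text \<open>A path outside the ladder from a left to a right corner, together with a route along the
  right half to the deleted rung and the intact left columns 2 to 4, would form a K4 minor.\<close>
lemma no_crossing:
  assumes tw: "tw_le (V - S) (H S) 2" and mid: "p 5 \<notin> S" "q 5 \<notin> S"
    and left: "\<forall>k\<in>{2, 3, 4}. p k \<notin> S \<and> q k \<notin> S"
    and right: "card (S \<inter> {p 6, p 7, p 8, q 6, q 7, q 8, p 9, q 9}) \<le> 1"
    and c: "c \<in> {p 1, q 1} - S" and d: "d \<in> {p 9, q 9} - S"
  shows "\<not> linked_via (V - rails - S) E c d"
proof
  let ?O = "V - rails - S"
  assume "linked_via ?O E c d"
  then obtain u w where uw: "u \<in> ?O" "{c, u} \<in> E" "{d, w} \<in> E" "(adj_in E ?O)\<^sup>*\<^sup>* u w"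
    unfolding linked_via_def by blast
  define A where "A = {y. (adj_in E ?O)\<^sup>*\<^sup>* u y}"
  have "A \<subseteq> ?O" unfolding A_def using walk_in_set[OF _ uw(1)] by blast
  have "u \<in> A" "w \<in> A" unfolding A_def using uw(4) by auto
  have outside_edge: "{a, b} \<in> H S" if "a \<in> ?O" "b \<notin> S" "{a, b} \<in> E" for a b
  proof (rule H_edge)
    show "{a, b} \<noteq> {p 5, q 5}"
    proof
      assume "{a, b} = {p 5, q 5}"
      moreover have "{p 5, q 5} \<subseteq> rails" by simp
      ultimately show False using that(1) by blast
    qed
  qed (use that in blast)+
  have "connected_on (H S) A"
    unfolding A_def by (rule connected_on_reachable) (use outside_edge in blast)
  obtain R where R: "R \<subseteq> V - S" "connected_on (H S) R" "d \<in> R" "p 5 \<in> R \<or> q 5 \<in> R"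
    "R \<subseteq> {p 5, p 6, p 7, p 8, p 9, q 5, q 6, q 7, q 8, q 9}"
    using route_to_middle[OF mid _ _ right] d by blast
  have "{w, d} \<in> H S" "{u, c} \<in> H S"
    using outside_edge \<open>w \<in> A\<close> \<open>u \<in> A\<close> \<open>A \<subseteq> ?O\<close> uw(2,3) c d by (auto simp: insert_commute)
  then have conn: "connected_on (H S) (insert c (A \<union> R))"
    using connected_on_Un[OF \<open>connected_on (H S) A\<close> R(2) \<open>w \<in> A\<close> R(3)] \<open>u \<in> A\<close>
    by (auto intro: connected_on_insert)
  have "c \<in> V" using c corners_rails rails_subset_V by blast
  then have sub: "insert c (A \<union> R) \<subseteq> V - S"
    using \<open>A \<subseteq> ?O\<close> R(1) c by blast
  let ?X = "{p 2, p 3, p 4, q 2, q 3, q 4}"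
  have "?X \<subseteq> rails" by simp
  then have "A \<inter> ?X = {}" using \<open>A \<subseteq> ?O\<close> by blast
  moreover have "R \<inter> ?X = {}"
  proof -
    have "?X \<inter> {p 5, p 6, p 7, p 8, p 9, q 5, q 6, q 7, q 8, q 9} = {}" by simp
    then show ?thesis using R(5) by blast
  qed
  moreover have "c \<notin> ?X" using c by auto
  ultimately have disj: "insert c (A \<union> R) \<inter> ?X = {}" by blast
  have "p 5 \<in> insert c (A \<union> R) \<or> q 5 \<in> insert c (A \<union> R)" using R(4) by blast
  from no_K4_from_corner[OF tw sub conn insertI1 _ this disj left] c show False by blast
qed

text \<open>Without a linking path, the outside splits into the part R reachable from the right corners
  and the rest, which attaches only at the left corners.\<close>
lemma tw_le_if_unlinked:
  assumes tw: "tw_le (V - S) (H S) 2"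
    and unlinked: "\<forall>c\<in>{p 1, q 1} - S. \<forall>d\<in>{p 9, q 9} - S. \<not> linked_via (V - rails - S) E c d"
  shows "tw_le (V - S) (del_edges E S) 2"
proof -
  let ?R = "reach_from E (V - rails - S) ({p 9, q 9} - S)"
  have R: "?R \<subseteq> V - rails - S" by (rule reach_from_subset)
  have "{p 5, q 5} \<inter> ({p 1, q 1} \<union> {p 9, q 9}) = {}" "{p 5, q 5} \<subseteq> rails" by simp_all
  then have p5: "p 5 \<notin> (V - rails - S - ?R) \<union> ({p 1, q 1} - S)" "p 5 \<notin> ?R \<union> ({p 9, q 9} - S)"
    using R by blast+
  have corners_V: "{p 1, q 1} \<union> {p 9, q 9} \<subseteq> V" using corners_rails rails_subset_V by blast
  show ?thesis
  proof (rule tw_le_from_sides[where Ol = "V - rails - S - ?R" and Or = ?R])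
    show "\<forall>a\<in>V - rails - S - ?R. \<forall>b\<in>?R \<union> ({p 9, q 9} - S). {a, b} \<notin> E"
    proof (intro ballI notI)
      fix a b assume a: "a \<in> V - rails - S - ?R" and b: "b \<in> ?R \<union> ({p 9, q 9} - S)" and "{a, b} \<in> E"
      then have "{b, a} \<in> E" by (simp add: insert_commute)
      have aX: "a \<in> V - rails - S" using a by blast
      have "a \<in> ?R"
      proof (cases "b \<in> ?R")
        case True
        then show ?thesis by (rule reach_from_closed[OF _ aX \<open>{b, a} \<in> E\<close>])
      next
        case False
        then have "b \<in> {p 9, q 9} - S" using b by blast
        then show ?thesis by (rule reach_from_start[OF _ aX \<open>{b, a} \<in> E\<close>])
      qed
      then show False using a by blast
    qed
    show "\<forall>a\<in>?R. \<forall>c\<in>{p 1, q 1} - S. {a, c} \<notin> E"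
    proof (intro ballI notI)
      fix a c assume "a \<in> ?R" "c \<in> {p 1, q 1} - S" "{a, c} \<in> E"
      obtain d where "d \<in> {p 9, q 9} - S" "linked_via (V - rails - S) E c d"
        using reach_from_linked[OF \<open>a \<in> ?R\<close> \<open>{a, c} \<in> E\<close>] .
      then show False using unlinked \<open>c \<in> {p 1, q 1} - S\<close> by blast
    qed
    show "tw_le ((V - rails - S - ?R) \<union> ({p 1, q 1} - S))
        (induced_edges E ((V - rails - S - ?R) \<union> ({p 1, q 1} - S))) 2"
      by (rule tw_le_induced_avoiding_p5[OF tw _ p5(1)]) (use corners_V in blast)
    show "tw_le (?R \<union> ({p 9, q 9} - S)) (induced_edges E (?R \<union> ({p 9, q 9} - S))) 2"
      by (rule tw_le_induced_avoiding_p5[OF tw _ p5(2)]) (use corners_V R in blast)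
  qed (use R in blast)+
qed

text \<open>If S takes at most one vertex from the corners of either end together with the interior,
  then S misses the columns 2 to 4 or the columns 6 to 8, and the K4 argument applies to the
  ladder read from the intact side.\<close>
lemma tw_le_if_light:
  assumes tw: "tw_le (V - S) (H S) 2" and "finite S" and mid: "p 5 \<notin> S" "q 5 \<notin> S"
    and light: "card (S \<inter> {p 1, q 1}) + card (S \<inter> (rails - {p 1, q 1, p 9, q 9})) \<le> 1"
      "card (S \<inter> {p 9, q 9}) + card (S \<inter> (rails - {p 1, q 1, p 9, q 9})) \<le> 1"
  shows "tw_le (V - S) (del_edges E S) 2"
proof (rule tw_le_if_unlinked[OF tw], intro ballI)
  let ?I = "rails - {p 1, q 1, p 9, q 9}"
  have inner: "{p 2, p 3, p 4, p 6, p 7, p 8, q 2, q 3, q 4, q 6, q 7, q 8} \<subseteq> ?I" by simp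
  fix c d assume c: "c \<in> {p 1, q 1} - S" and d: "d \<in> {p 9, q 9} - S"
  show "\<not> linked_via (V - rails - S) E c d"
  proof (cases "\<forall>k\<in>{2, 3, 4}. p k \<notin> S \<and> q k \<notin> S")
    case True
    have "card (S \<inter> {p 6, p 7, p 8, q 6, q 7, q 8, p 9, q 9}) \<le> card (S \<inter> ?I) + card (S \<inter> {p 9, q 9})"
      by (rule card_Int_le_add[OF \<open>finite S\<close>]) (use inner in blast)
    then show ?thesis using no_crossing[OF tw mid True _ c d] light(2) by simp
  next
    case False
    then obtain x where "x \<in> S" and x2: "x \<in> {p 2, p 3, p 4, q 2, q 3, q 4}" by auto
    with inner have x: "x \<in> S \<inter> ?I" "x \<in> {p 2, p 3, p 4, q 2, q 3, q 4}" by blast+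
    have "y \<notin> S" if "y \<in> {p 6, p 7, p 8, q 6, q 7, q 8}" for y
    proof
      assume "y \<in> S"
      have "y \<noteq> x" using that x(2) by auto
      then have "card {x, y} \<le> card (S \<inter> ?I)"
        using x(1) \<open>y \<in> S\<close> that inner \<open>finite S\<close> by (intro card_mono) auto
      then show False using light(1) \<open>y \<noteq> x\<close> by simp
    qed
    then have free: "\<forall>k\<in>{2, 3, 4}. p (10 - k) \<notin> S \<and> q (10 - k) \<notin> S" by auto
    have "card (S \<inter> {p 4, p 3, p 2, q 4, q 3, q 2, p 1, q 1}) \<le> card (S \<inter> ?I) + card (S \<inter> {p 1, q 1})"
      by (rule card_Int_le_add[OF \<open>finite S\<close>]) (use inner in blast)
    then have right: "card (S \<inter> {p 4, p 3, p 2, q 4, q 3, q 2, p 1, q 1}) \<le> 1" using light(1) by simp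
    interpret rv: ladder V E "\<lambda>i. p (10 - i)" "\<lambda>i. q (10 - i)" by (rule ladder_reverse[OF ladder_axioms])
    have "\<not> linked_via (V - rv.rails - S) E d c"
      by (rule rv.no_crossing) (use tw mid free right c d in simp_all)
    then show ?thesis using linked_via_sym[of "V - rails - S" E c d] unfolding rails_reverse by blast
  qed
qed

lemma has_solution_if_rung_deleted:
  assumes "has_solution V (E - {{p 5, q 5}}) t"
  shows "has_solution V E t"
proof -
  obtain S where S: "S \<subseteq> V" "card S \<le> t" and tw: "tw_le (V - S) (H S) 2"
    using assms unfolding has_solution_def is_solution_def by blast
  have "finite S" using S(1) finite_V finite_subset by blast
  let ?I = "rails - {p 1, q 1, p 9, q 9}"
  consider (mid) "p 5 \<in> S \<or> q 5 \<in> S"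
    | (left) "2 \<le> card (S \<inter> {p 1, q 1}) + card (S \<inter> ?I)"
    | (right) "2 \<le> card (S \<inter> {p 9, q 9}) + card (S \<inter> ?I)"
    | (light) "p 5 \<notin> S" "q 5 \<notin> S" "card (S \<inter> {p 1, q 1}) + card (S \<inter> ?I) \<le> 1"
      "card (S \<inter> {p 9, q 9}) + card (S \<inter> ?I) \<le> 1"
    by linarith
  then show ?thesis
  proof cases
    case mid
    then have "del_edges E S = H S" unfolding del_edges_def by auto
    then show ?thesis using S tw unfolding has_solution_def is_solution_def by auto
  next
    case left
    then show ?thesis by (rule has_solution_if_left_heavy[OF S tw])
  next
    case right
    interpret rv: ladder V E "\<lambda>i. p (10 - i)" "\<lambda>i. q (10 - i)" by (rule ladder_reverse[OF ladder_axioms])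
    have "{p 9, q 9, p 1, q 1} = {p 1, q 1, p 9, q 9}" by blast
    then show ?thesis
      using rv.has_solution_if_left_heavy[OF S] tw right unfolding rails_reverse by simp
  next
    case light
    then show ?thesis
      using tw_le_if_light[OF tw \<open>finite S\<close>] S unfolding has_solution_def is_solution_def by blast
  qed
qed

end

theorem mainTheorem14:
  fixes V :: "'a set" and E :: "'a set set" and t :: nat and p q :: "nat \<Rightarrow> 'a"
  assumes "simple_graph V E"
    and "induced_path V E p 9"
    and "induced_path V E q 9"
    and "p ` {1..9} \<inter> q ` {1..9} = {}"
    and "\<forall>i\<in>{1..9}. {p i, q i} \<in> E"
    and "tw_le (p ` {1..9} \<union> q ` {1..9}) (induced_edges E (p ` {1..9} \<union> q ` {1..9})) 2"
    and "\<forall>v \<in> p ` {1..9} \<union> q ` {1..9}.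
           (\<exists>w \<in> V - (p ` {1..9} \<union> q ` {1..9}). {v, w} \<in> E) \<longrightarrow> v \<in> {p 1, p 9, q 1, q 9}"
  shows "has_solution V E t \<longleftrightarrow> has_solution V (E - {{p 5, q 5}}) t"
proof
  interpret ladder V E p q using assms by (rule ladder.intro)
  show "has_solution V (E - {{p 5, q 5}}) t" if "has_solution V E t"
    using that tw_le_delete_edge[OF simple] unfolding has_solution_def is_solution_def by blast
  show "has_solution V E t" if "has_solution V (E - {{p 5, q 5}}) t"
    using that by (rule has_solution_if_rung_deleted)
qed

end
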